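(* Let $k\geqslant 1$ be an integer and let $G$ be a chordal graph. Then $G$ is $\mathbf{W_k}$ if and only if there exists a partition of $V(G)$ into simplices such that each simplex of the partition contains at least $k$ simplicial vertices of $G$.
   Context: All graphs are finite and simple. A chordal graph is a graph with no induced cycle of length at least four. A vertex $v$ is simplicial in $G$ if its neighbourhood $N(v)$ induces a complete graph; in that case $N[v]=N(v)\cup\{v\}$ is called a simplex. For a positive integer $k$, a graph $G$ is $\mathbf{W_k}$ if for any $k$ pairwise disjoint independent sets $A_1,\dots,A_k$ of $G$ there exist $k$ pairwise disjoint maximum independent sets $S_1,\dots,S_k$ of $G$ with $A_i\subseteq S_i$ for all $i\in[k]$. *)

theory Defs
  imports Main
begin

definition simple_graph :: "'a set \<Rightarrow> ('a \<Rightarrow> 'a \<Rightarrow> bool) \<Rightarrow> bool" where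
  "simple_graph V E \<longleftrightarrow> finite V \<and> (\<forall>x y. E x y \<longrightarrow> x \<in> V \<and> y \<in> V)
     \<and> (\<forall>x y. E x y \<longrightarrow> E y x) \<and> (\<forall>x. \<not> E x x)"

definition induced_cycle :: "'a set \<Rightarrow> ('a \<Rightarrow> 'a \<Rightarrow> bool) \<Rightarrow> 'a list \<Rightarrow> bool" where
  "induced_cycle V E xs \<longleftrightarrow> distinct xs \<and> set xs \<subseteq> V \<and>
     (\<forall>i < length xs. \<forall>j < length xs.
        E (xs ! i) (xs ! j) \<longleftrightarrow> (j = Suc i mod length xs \<or> i = Suc j mod length xs))"

definition chordal :: "'a set \<Rightarrow> ('a \<Rightarrow> 'a \<Rightarrow> bool) \<Rightarrow> bool" where
  "chordal V E \<longleftrightarrow> \<not> (\<exists>xs. length xs \<ge> 4 \<and> induced_cycle V E xs)"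

definition nbhd :: "'a set \<Rightarrow> ('a \<Rightarrow> 'a \<Rightarrow> bool) \<Rightarrow> 'a \<Rightarrow> 'a set" where
  "nbhd V E v = {u \<in> V. E v u}"

definition clique :: "('a \<Rightarrow> 'a \<Rightarrow> bool) \<Rightarrow> 'a set \<Rightarrow> bool" where
  "clique E C \<longleftrightarrow> (\<forall>x\<in>C. \<forall>y\<in>C. x \<noteq> y \<longrightarrow> E x y)"

definition simplicial :: "'a set \<Rightarrow> ('a \<Rightarrow> 'a \<Rightarrow> bool) \<Rightarrow> 'a \<Rightarrow> bool" where
  "simplicial V E v \<longleftrightarrow> v \<in> V \<and> clique E (nbhd V E v)"

definition simplex :: "'a set \<Rightarrow> ('a \<Rightarrow> 'a \<Rightarrow> bool) \<Rightarrow> 'a set \<Rightarrow> bool" where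
  "simplex V E S \<longleftrightarrow> (\<exists>v. simplicial V E v \<and> S = insert v (nbhd V E v))"

definition independent :: "'a set \<Rightarrow> ('a \<Rightarrow> 'a \<Rightarrow> bool) \<Rightarrow> 'a set \<Rightarrow> bool" where
  "independent V E A \<longleftrightarrow> A \<subseteq> V \<and> (\<forall>x\<in>A. \<forall>y\<in>A. \<not> E x y)"

definition max_independent :: "'a set \<Rightarrow> ('a \<Rightarrow> 'a \<Rightarrow> bool) \<Rightarrow> 'a set \<Rightarrow> bool" where
  "max_independent V E S \<longleftrightarrow> independent V E S \<and>
     (\<forall>T. independent V E T \<longrightarrow> card T \<le> card S)"

text \<open>W_k, with the index set [k] rendered as {0..<k}.\<close>
definition W_k :: "nat \<Rightarrow> 'a set \<Rightarrow> ('a \<Rightarrow> 'a \<Rightarrow> bool) \<Rightarrow> bool" where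
  "W_k k V E \<longleftrightarrow>
    (\<forall>A :: nat \<Rightarrow> 'a set.
       (\<forall>i<k. independent V E (A i)) \<and> (\<forall>i<k. \<forall>j<k. i \<noteq> j \<longrightarrow> A i \<inter> A j = {})
       \<longrightarrow> (\<exists>S :: nat \<Rightarrow> 'a set.
              (\<forall>i<k. max_independent V E (S i) \<and> A i \<subseteq> S i) \<and>
              (\<forall>i<k. \<forall>j<k. i \<noteq> j \<longrightarrow> S i \<inter> S j = {})))"

definition is_partition :: "'a set \<Rightarrow> 'a set set \<Rightarrow> bool" where
  "is_partition V P \<longleftrightarrow> \<Union>P = V \<and> {} \<notin> P \<and>
     (\<forall>X\<in>P. \<forall>Y\<in>P. X \<noteq> Y \<longrightarrow> X \<inter> Y = {})"

end

theory Submission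
  imports Defs
begin

text \<open>For the direction from partitions to \<open>W\<^sub>k\<close>: an independent set meets every simplex of
  the partition, a clique, at most once, so a set choosing one vertex in each simplex is a maximum
  independent set as soon as it is independent, which holds if each choice is either simplicial
  or taken from one fixed independent set. Given disjoint independent sets \<open>A\<^sub>1, \<dots>, A\<^sub>k\<close>,
  in each simplex the \<open>A\<^sub>i\<close> meeting it dictate their choice, and the at least \<open>k\<close> simplicial
  vertices leave enough unused ones for the other indices.

  Conversely, \<open>W\<^sub>k\<close> implies \<open>W\<^sub>1\<close>, and in a well-covered chordal graph the simplices
  partition the vertex set: two distinct simplices that meet could be traded for a larger
  independent set, and every vertex lies in a simplex, by induction after deleting a simplex and
  Dirac's theorem that chordal graphs have simplicial vertices. If a simplex \<open>Q\<close> had fewer than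
  \<open>k\<close> simplicial vertices, \<open>W\<^sub>k\<close> applied to these as singletons together with an independent
  set dominating the rest of \<open>Q\<close> would give a maximum independent set missing \<open>Q\<close>.\<close>

section \<open>Independent sets and simplices\<close>

locale simple_adj =
  fixes E :: "'a \<Rightarrow> 'a \<Rightarrow> bool"
  assumes adj_sym: "E x y \<Longrightarrow> E y x"
    and adj_irrefl: "\<not> E x x"

lemma simple_graph_simple_adj: "simple_graph V E \<Longrightarrow> simple_adj E"
  unfolding simple_graph_def by unfold_locales blast+

lemma chordal_subset: "chordal V E \<Longrightarrow> U \<subseteq> V \<Longrightarrow> chordal U E"
  unfolding chordal_def induced_cycle_def by blast

definition maximal_independent :: "'a set \<Rightarrow> ('a \<Rightarrow> 'a \<Rightarrow> bool) \<Rightarrow> 'a set \<Rightarrow> bool" where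
  "maximal_independent U E M \<longleftrightarrow> independent U E M \<and> (\<forall>x\<in>U - M. \<exists>y\<in>M. E x y)"

text \<open>This is the property \<open>W\<^sub>1\<close>; for finite graphs it says that every maximal independent
  set is maximum.\<close>
definition well_covered :: "'a set \<Rightarrow> ('a \<Rightarrow> 'a \<Rightarrow> bool) \<Rightarrow> bool" where
  "well_covered U E \<longleftrightarrow> (\<forall>A. independent U E A \<longrightarrow> (\<exists>S. max_independent U E S \<and> A \<subseteq> S))"

lemma independent_finite: "finite U \<Longrightarrow> independent U E S \<Longrightarrow> finite S"
  unfolding independent_def using finite_subset by blast

lemma independent_clique_unique:
  "independent U E A \<Longrightarrow> clique E Q \<Longrightarrow> a \<in> A \<inter> Q \<Longrightarrow> b \<in> A \<inter> Q \<Longrightarrow> a = b"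
  unfolding independent_def clique_def by blast

context simple_adj
begin

lemma independent_insert:
  assumes "independent U E S" "x \<in> U" "\<forall>y\<in>S. \<not> E x y"
  shows "independent U E (insert x S)"
  using assms adj_sym adj_irrefl unfolding independent_def by blast

lemma clique_closed_nbhd: "simplicial U E u \<Longrightarrow> clique E (insert u (nbhd U E u))"
  unfolding simplicial_def clique_def nbhd_def by (auto dest: adj_sym)

lemma simplicial_closed_nbhd_eq:
  assumes u: "simplicial U E u" and w: "simplicial U E w" and wu: "w \<in> insert u (nbhd U E u)"
  shows "insert w (nbhd U E w) = insert u (nbhd U E u)"
proof -
  have "insert w (nbhd U E w) \<subseteq> insert u (nbhd U E u)"
    if "simplicial U E w" "w \<in> insert u (nbhd U E u)" "u \<in> insert w (nbhd U E w)" for u w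
    using that unfolding simplicial_def clique_def nbhd_def by (auto dest: adj_sym)
  moreover have "u \<in> insert w (nbhd U E w)"
    using u wu unfolding simplicial_def nbhd_def by (auto dest: adj_sym)
  ultimately show ?thesis using u w wu by blast
qed

lemma simplicial_subset:
  assumes "simplicial U' E w" "U' \<subseteq> U" "nbhd U E w \<subseteq> U'"
  shows "simplicial U E w"
proof -
  have "nbhd U E w = nbhd U' E w" using assms(2,3) unfolding nbhd_def by auto
  then show ?thesis using assms(1,2) unfolding simplicial_def by auto
qed

lemma induced_cycle_C4:
  assumes "{a, b, c, d} \<subseteq> U" "distinct [a, b, c, d]"
    and "E a b" "E b c" "E c d" "E d a" "\<not> E a c" "\<not> E b d"
  shows "induced_cycle U E [a, b, c, d]"
  unfolding induced_cycle_def
proof (intro conjI allI impI)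
  fix i j assume "i < length [a, b, c, d]" "j < length [a, b, c, d]"
  then have "i = 0 \<or> i = 1 \<or> i = 2 \<or> i = 3" "j = 0 \<or> j = 1 \<or> j = 2 \<or> j = 3" by auto
  moreover have "E b a" "E c b" "E d c" "E a d" "\<not> E c a" "\<not> E d b"
    using assms(3-) adj_sym by blast+
  moreover have "\<not> E a a" "\<not> E b b" "\<not> E c c" "\<not> E d d" using adj_irrefl by auto
  ultimately show "E ([a, b, c, d] ! i) ([a, b, c, d] ! j) \<longleftrightarrow>
      (j = Suc i mod length [a, b, c, d] \<or> i = Suc j mod length [a, b, c, d])"
    using assms(3-) by (elim disjE; simp)
qed (use assms in auto)

lemma chordal_no_C4:
  assumes "chordal U E" "{a, b, c, d} \<subseteq> U" "distinct [a, b, c, d]"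
    and "E a b" "E b c" "E c d" "E d a" "\<not> E a c" "\<not> E b d"
  shows False
  using induced_cycle_C4[OF assms(2-)] assms(1) unfolding chordal_def by force

lemma maximal_independent_max:
  assumes "well_covered U E" "maximal_independent U E M"
  shows "max_independent U E M"
proof -
  obtain S where S: "max_independent U E S" "M \<subseteq> S"
    using assms unfolding well_covered_def maximal_independent_def by blast
  have "S \<subseteq> M"
  proof
    fix x assume "x \<in> S"
    show "x \<in> M"
    proof (rule ccontr)
      assume "x \<notin> M"
      moreover have "x \<in> U" using S \<open>x \<in> S\<close> unfolding max_independent_def independent_def by blast
      ultimately obtain y where "y \<in> M" "E x y" using assms(2) unfolding maximal_independent_def by blast
      then show False using S \<open>x \<in> S\<close> unfolding max_independent_def independent_def by blast
    qed
  qed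
  then show ?thesis using S by (simp add: subset_antisym)
qed

lemma independent_extends_maximal:
  assumes "finite U" "independent U E T"
  obtains M where "T \<subseteq> M" "maximal_independent U E M"
proof -
  let ?P = "\<lambda>M. T \<subseteq> M \<and> independent U E M"
  have "card M < card U + 1" if "?P M" for M
    using that card_mono[OF assms(1)] unfolding independent_def by fastforce
  then obtain M where M: "?P M" "\<forall>M'. ?P M' \<longrightarrow> card M' \<le> card M"
    using ex_has_greatest_nat[of ?P T card "card U + 1"] assms(2) by blast
  have "\<exists>y\<in>M. E x y" if x: "x \<in> U - M" for x
  proof (rule ccontr)
    assume "\<not> ?thesis"
    then have "?P (insert x M)" using M x independent_insert by (auto dest: adj_sym)
    then have "card (insert x M) \<le> card M" using M by blast
    then show False using x M independent_finite[OF assms(1), of E M] by simp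
  qed
  then show ?thesis using M by (intro that[of M]) (auto simp: maximal_independent_def)
qed

lemma max_independent_meets_simplex:
  assumes "finite U" "max_independent U E S" "simplicial U E u"
  shows "S \<inter> insert u (nbhd U E u) \<noteq> {}"
proof
  assume disj: "S \<inter> insert u (nbhd U E u) = {}"
  have S: "independent U E S" "finite S"
    using assms(2) independent_finite[OF assms(1)] unfolding max_independent_def by auto
  have "\<forall>y\<in>S. \<not> E u y" using disj S(1) unfolding nbhd_def independent_def by blast
  then have "independent U E (insert u S)"
    using independent_insert[OF S(1)] assms(3) unfolding simplicial_def by blast
  then have "card (insert u S) \<le> card S" using assms(2) unfolding max_independent_def by blast
  then show False using disj S(2) by simp
qed

end

section \<open>Chordless walks and simplicial vertices\<close>

fun walk :: "('a \<Rightarrow> 'a \<Rightarrow> bool) \<Rightarrow> 'a list \<Rightarrow> bool" where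
  "walk E [] = True"
| "walk E [x] = True"
| "walk E (x # y # xs) \<longleftrightarrow> E x y \<and> walk E (y # xs)"

definition chordless :: "('a \<Rightarrow> 'a \<Rightarrow> bool) \<Rightarrow> 'a list \<Rightarrow> bool" where
  "chordless E q \<longleftrightarrow>
     (\<forall>i j. Suc i < j \<longrightarrow> j < length q \<longrightarrow> q ! i \<noteq> q ! j \<and> \<not> E (q ! i) (q ! j))"

lemma walk_Cons: "walk E (x # xs) \<longleftrightarrow> walk E xs \<and> (xs \<noteq> [] \<longrightarrow> E x (hd xs))"
  by (cases xs) auto

lemma walk_append:
  "walk E (xs @ ys) \<longleftrightarrow> walk E xs \<and> walk E ys \<and> (xs \<noteq> [] \<and> ys \<noteq> [] \<longrightarrow> E (last xs) (hd ys))"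
  by (induction xs) (auto simp: walk_Cons)

lemma walk_nth: "walk E q \<Longrightarrow> Suc i < length q \<Longrightarrow> E (q ! i) (q ! Suc i)"
proof (induction q arbitrary: i)
  case (Cons x q)
  then show ?case by (cases i) (auto simp: walk_Cons hd_conv_nth)
qed simp

lemma walk_splice:
  assumes "walk E q" "i < j" "j < length q" "E (q ! i) (q ! j)"
  shows "walk E (take (Suc i) q @ drop j q)"
proof -
  have "walk E (take (Suc i) q)" "walk E (drop j q)"
    using assms(1) walk_append[of E _ "drop _ q"] walk_append[of E "take _ q"]
    by (metis append_take_drop_id)+
  moreover have "last (take (Suc i) q) = q ! i" "hd (drop j q) = q ! j"
    using assms(2,3) by (simp_all add: take_Suc_conv_app_nth hd_drop_conv_nth)
  ultimately show ?thesis
    using assms(4) by (simp add: walk_append)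
qed

lemma walk_shortcut:
  assumes q: "walk E q" and ij: "Suc i < j" "j < length q" and chord: "q ! i = q ! j \<or> E (q ! i) (q ! j)"
  obtains q' where "walk E q'" "q' \<noteq> []" "length q' < length q"
    "hd q' = hd q" "last q' = last q" "set q' \<subseteq> set q"
proof -
  have hd: "hd (take (Suc i) q @ r) = hd q" for r
    using ij by (cases q) auto
  have last: "last (r @ drop j' q) = last q" if "j' < length q" for r j'
    using that by (simp add: last_drop)
  have sub: "set (take (Suc i) q @ drop j' q) \<subseteq> set q" for j'
    by (auto dest: in_set_takeD in_set_dropD)
  consider "E (q ! i) (q ! j)" | "q ! i = q ! j" "Suc j < length q" | "q ! i = q ! j" "Suc j = length q"
    using chord ij by linarith
  then show ?thesis
  proof cases
    case 1
    then show ?thesis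
      using that[OF walk_splice[OF q _ ij(2) 1]] hd last[OF ij(2)] sub ij by simp
  next
    case 2
    then have "E (q ! i) (q ! Suc j)" using walk_nth[OF q] by simp
    then have "walk E (take (Suc i) q @ drop (Suc j) q)"
      using walk_splice[OF q _ 2(2)] ij by simp
    moreover have "take (Suc i) q \<noteq> []" using ij by (cases q) auto
    ultimately show ?thesis
      using that hd last[OF 2(2)] sub ij by simp
  next
    case 3
    have "walk E (take (Suc i) q)"
      using q walk_append[of E "take _ q"] by (metis append_take_drop_id)
    moreover have "last (take (Suc i) q) = last q"
    proof -
      have "last q = q ! j" using 3 ij by (cases q) (auto simp: last_conv_nth)
      then show ?thesis using 3 ij by (simp add: take_Suc_conv_app_nth)
    qed
    moreover have "take (Suc i) q \<noteq> []" "length (take (Suc i) q) < length q"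
      using ij by (cases q, auto)
    moreover have "hd (take (Suc i) q) = hd q" using hd[of "[]"] by simp
    ultimately show ?thesis
      by (intro that[of "take (Suc i) q"]) (auto dest: in_set_takeD)
  qed
qed

lemma shortest_walk_chordless:
  assumes "walk E q" "q \<noteq> []"
    and shortest: "\<And>q'. walk E q' \<Longrightarrow> q' \<noteq> [] \<Longrightarrow> hd q' = hd q \<Longrightarrow> last q' = last q \<Longrightarrow>
      set q' \<subseteq> set q \<Longrightarrow> length q \<le> length q'"
  shows "chordless E q"
  unfolding chordless_def
proof (intro allI impI)
  fix i j assume "Suc i < j" "j < length q"
  then show "q ! i \<noteq> q ! j \<and> \<not> E (q ! i) (q ! j)"
    using walk_shortcut[OF assms(1)] shortest by (metis leD)
qed

definition component :: "'a set \<Rightarrow> ('a \<Rightarrow> 'a \<Rightarrow> bool) \<Rightarrow> 'a \<Rightarrow> 'a set" where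
  "component B E x = {c. (\<lambda>a c. E a c \<and> a \<in> B \<and> c \<in> B)\<^sup>*\<^sup>* x c}"

lemma component_subset: "x \<in> B \<Longrightarrow> component B E x \<subseteq> B"
  unfolding component_def by (auto elim: rtranclp.cases)

lemma component_closed: "c \<in> component B E x \<Longrightarrow> y \<in> B \<Longrightarrow> E c y \<Longrightarrow> c \<in> B \<Longrightarrow>
    y \<in> component B E x"
  unfolding component_def by (simp add: rtranclp.rtrancl_into_rtrancl)

lemma component_walk:
  assumes "c \<in> component B E x" "x \<in> B"
  obtains p where "walk E p" "p \<noteq> []" "hd p = x" "last p = c" "set p \<subseteq> B"
proof -
  from assms(1) have "(\<lambda>a c. E a c \<and> a \<in> B \<and> c \<in> B)\<^sup>*\<^sup>* x c" unfolding component_def by simp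
  then have "\<exists>p. walk E p \<and> p \<noteq> [] \<and> hd p = x \<and> last p = c \<and> set p \<subseteq> B"
  proof (induction rule: rtranclp_induct)
    case base
    then show ?case using assms(2) by (intro exI[of _ "[x]"]) simp
  next
    case (step b c)
    then obtain p where "walk E p" "p \<noteq> []" "hd p = x" "last p = b" "set p \<subseteq> B" by blast
    then show ?case using step(2) by (intro exI[of _ "p @ [c]"]) (simp add: walk_append)
  qed
  then show ?thesis using that by blast
qed

context simple_adj
begin

lemma chordless_walk_adj:
  assumes "walk E q" "chordless E q" "i < length q" "j < length q"
  shows "E (q ! i) (q ! j) \<longleftrightarrow> j = Suc i \<or> i = Suc j"
proof -
  consider "j = Suc i" | "i = Suc j" | "i = j" | "Suc i < j" | "Suc j < i"
    by linarith
  then show ?thesis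
    using assms walk_nth[OF assms(1)] adj_irrefl unfolding chordless_def
    by cases (auto dest: adj_sym)
qed

lemma chordless_walk_distinct:
  assumes "walk E q" "chordless E q"
  shows "distinct q"
  unfolding distinct_conv_nth
proof (intro allI impI)
  fix i j assume ij: "i < length q" "j < length q" "i \<noteq> j"
  then consider "j = Suc i" | "i = Suc j" | "Suc i < j" | "Suc j < i" by linarith
  then show "q ! i \<noteq> q ! j"
    using assms chordless_walk_adj[OF assms _ ij(1)] chordless_walk_adj[OF assms ij(1)] ij
      adj_irrefl unfolding chordless_def by cases metis+
qed

lemma induced_cycle_Cons:
  assumes q: "walk E q" "chordless E q" "3 \<le> length q"
    and apex: "\<And>k. k < length q \<Longrightarrow> E v (q ! k) \<longleftrightarrow> k = 0 \<or> k = length q - 1"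
    and "v \<notin> set q" "insert v (set q) \<subseteq> U"
  shows "induced_cycle U E (v # q)"
  unfolding induced_cycle_def
proof (intro conjI allI impI)
  show "distinct (v # q)" "set (v # q) \<subseteq> U"
    using chordless_walk_distinct[OF q(1,2)] assms(5,6) by auto
  define n where "n = length q"
  have succ: "Suc a mod Suc n = (if a = n then 0 else Suc a)" if "a < Suc n" for a
    using that by (simp add: mod_Suc)
  fix a b assume "a < length (v # q)" "b < length (v # q)"
  then have ab: "a < Suc n" "b < Suc n" unfolding n_def by auto
  have apex': "E (q ! k) v \<longleftrightarrow> k = 0 \<or> k = n - 1" if "k < n" for k
    using apex that adj_sym unfolding n_def by blast
  show "E ((v # q) ! a) ((v # q) ! b) \<longleftrightarrow>
      (b = Suc a mod length (v # q) \<or> a = Suc b mod length (v # q))"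
    unfolding length_Cons n_def[symmetric] succ[OF ab(1)] succ[OF ab(2)]
    using ab q(3) apex[folded n_def] apex' chordless_walk_adj[OF q(1,2)] adj_irrefl
    by (cases a; cases b) (auto simp: n_def)
qed

lemma chordal_walk_ends_adjacent:
  assumes "chordal U E" "walk E q" "q \<noteq> []" "hd q = x" "last q = y" "set q \<subseteq> U"
    and "v \<in> U" "E v x" "E v y" "x \<noteq> y"
    and inner: "\<forall>z\<in>set q. z = x \<or> z = y \<or> (z \<noteq> v \<and> \<not> E v z)"
  shows "E x y"
proof (rule ccontr)
  assume nxy: "\<not> E x y"
  let ?P = "\<lambda>p. walk E p \<and> p \<noteq> [] \<and> hd p = x \<and> last p = y \<and> set p \<subseteq> set q"
  obtain p where p: "?P p" and shortest: "\<And>p'. ?P p' \<Longrightarrow> length p \<le> length p'"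
    using ex_has_least_nat[of ?P q length] assms(2-5) by blast
  have chordless: "chordless E p"
    using p shortest by (intro shortest_walk_chordless) auto
  have dist: "distinct p" using chordless_walk_distinct p chordless by blast
  have p0: "p ! 0 = x" and pl: "p ! (length p - 1) = y"
    using p by (metis hd_conv_nth, metis last_conv_nth)
  have len: "3 \<le> length p"
  proof -
    have "length p \<noteq> 1" using p0 pl \<open>x \<noteq> y\<close> by auto
    moreover have "length p \<noteq> 2" using walk_nth[of E p 0] p p0 pl nxy by auto
    moreover have "length p \<noteq> 0" using p by simp
    ultimately show ?thesis by linarith
  qed
  have apex: "E v (p ! k) \<longleftrightarrow> k = 0 \<or> k = length p - 1" if "k < length p" for k
  proof (cases "k = 0 \<or> k = length p - 1")
    case False
    then have "p ! k \<noteq> x" "p ! k \<noteq> y"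
      using p p0 pl that nth_eq_iff_index_eq[OF dist, of k 0]
        nth_eq_iff_index_eq[OF dist, of k "length p - 1"] by auto
    then show ?thesis using inner p that False by (meson nth_mem subsetD)
  qed (use p0 pl assms in auto)
  have "v \<notin> set p"
  proof
    assume "v \<in> set p"
    then have "v = x \<or> v = y" using inner p by auto
    then show False using assms(8,9) adj_irrefl by auto
  qed
  then have "induced_cycle U E (v # p)"
    using induced_cycle_Cons[OF p[THEN conjunct1] chordless len apex] p assms(6,7) by auto
  then show False using assms(1) len unfolding chordal_def by force
qed

lemma component_connected:
  assumes "c1 \<in> component B E x" "c2 \<in> component B E x"
  shows "c2 \<in> component B E c1"
proof -
  let ?R = "\<lambda>a c. E a c \<and> a \<in> B \<and> c \<in> B"
  have "symp ?R" unfolding symp_def using adj_sym by blast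
  moreover have "?R\<^sup>*\<^sup>* x c1" using assms(1) unfolding component_def by simp
  ultimately have "?R\<^sup>*\<^sup>* c1 x" by (rule sympD[OF symp_rtranclp])
  then show ?thesis using assms(2) unfolding component_def by simp
qed

text \<open>Minimal vertex separators of chordal graphs are cliques.\<close>
lemma chordal_component_boundary_clique:
  fixes U :: "'a set" and v :: 'a
  defines "B \<equiv> {z\<in>U. z \<noteq> v \<and> \<not> E v z}"
  assumes "chordal U E" "v \<in> U" "x \<in> B" "c1 \<in> component B E x" "c2 \<in> component B E x"
    and "y1 \<in> U" "y2 \<in> U" "y1 \<noteq> y2" "E v y1" "E v y2" "E y1 c1" "E y2 c2"
  shows "E y1 y2"
proof -
  have "c1 \<in> B" using component_subset[OF assms(4)] assms(5) by blast
  then obtain p where p: "walk E p" "p \<noteq> []" "hd p = c1" "last p = c2" "set p \<subseteq> B"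
    using component_walk[OF component_connected[OF assms(5,6)]] by blast
  have "walk E (y1 # p @ [y2])"
    using p assms(12) adj_sym[OF assms(13)] by (simp add: walk_append walk_Cons)
  then show ?thesis
    using chordal_walk_ends_adjacent[OF assms(2), of "y1 # p @ [y2]" y1 y2 v] p assms(3,7-11)
    unfolding B_def by auto
qed

lemma nbhd_component_subset:
  fixes U :: "'a set" and v :: 'a
  defines "B \<equiv> {z\<in>U. z \<noteq> v \<and> \<not> E v z}"
  assumes "x \<in> B" "c \<in> component B E x"
  shows "nbhd U E c \<subseteq> component B E x \<union> {y\<in>U. E v y \<and> (\<exists>c\<in>component B E x. E y c)}"
proof
  fix y assume "y \<in> nbhd U E c"
  moreover have "c \<in> B" using component_subset[OF assms(2)] assms(3) by blast
  ultimately have y: "y \<in> U" "E c y" "y \<noteq> v" using adj_sym unfolding nbhd_def B_def by auto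
  show "y \<in> component B E x \<union> {y\<in>U. E v y \<and> (\<exists>c\<in>component B E x. E y c)}"
  proof (cases "E v y")
    case True
    then show ?thesis using y assms(3) adj_sym by blast
  next
    case False
    then show ?thesis using component_closed[OF assms(3) _ y(2) \<open>c \<in> B\<close>] y unfolding B_def by blast
  qed
qed

lemma exists_simplicial_nonadjacent:
  assumes "finite U" "chordal U E" "v \<in> U" "x \<in> U" "x \<noteq> v" "\<not> E v x"
  shows "\<exists>w\<in>U. w \<noteq> v \<and> \<not> E v w \<and> simplicial U E w"
  using assms
proof (induction "card U" arbitrary: U v x rule: less_induct)
  case less
  define B where "B = {z\<in>U. z \<noteq> v \<and> \<not> E v z}"
  define C where "C = component B E x"
  define S where "S = {y\<in>U. E v y \<and> (\<exists>c\<in>C. E y c)}"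
  define U' where "U' = C \<union> S"
  have "x \<in> B" using less.prems(4-6) unfolding B_def by simp
  then have CB: "C \<subseteq> B" "x \<in> C"
    unfolding C_def by (rule component_subset) (simp add: component_def)
  have "U' \<subset> U" using CB less.prems(3) adj_irrefl unfolding U'_def S_def B_def by auto
  then have U': "card U' < card U" "finite U'" "chordal U' E"
    using less.prems(1,2) chordal_subset psubset_card_mono finite_subset by blast+
  have nbhd_C: "nbhd U E c \<subseteq> U'" if "c \<in> C" for c
    using nbhd_component_subset[OF \<open>x \<in> B\<close>[unfolded B_def]] that
    unfolding U'_def S_def C_def B_def by blast
  have S_clique: "E y1 y2" if "y1 \<in> S" "y2 \<in> S" "y1 \<noteq> y2" for y1 y2
    using chordal_component_boundary_clique[OF less.prems(2,3) \<open>x \<in> B\<close>[unfolded B_def]] that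
    unfolding S_def C_def B_def by blast
  have "\<exists>w\<in>C. simplicial U' E w"
  proof (cases "\<forall>y1\<in>U'. \<forall>y2\<in>U'. y1 \<noteq> y2 \<longrightarrow> E y1 y2")
    case True
    then have "simplicial U' E x"
      using CB(2) unfolding simplicial_def clique_def nbhd_def U'_def by auto
    then show ?thesis using CB(2) by blast
  next
    case False
    then obtain y1 y2 where y: "y1 \<in> U'" "y2 \<in> U'" "y1 \<noteq> y2" "\<not> E y1 y2" by blast
    obtain w1 where w1: "w1 \<in> U'" "w1 \<noteq> y1" "\<not> E y1 w1" "simplicial U' E w1"
      using less.hyps[OF U' y(1,2) y(3)[symmetric] y(4)] by blast
    obtain w2 where w2: "w2 \<in> U'" "w2 \<noteq> w1" "\<not> E w1 w2" "simplicial U' E w2"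
      using less.hyps[OF U' w1(1) y(1) w1(2)[symmetric]] w1(3) adj_sym by blast
    show ?thesis using w1 w2 S_clique unfolding U'_def by blast
  qed
  then obtain w where "w \<in> C" "simplicial U' E w" by blast
  then have "simplicial U E w" using simplicial_subset nbhd_C \<open>U' \<subset> U\<close> by blast
  then show ?case using \<open>w \<in> C\<close> CB unfolding B_def by blast
qed

lemma exists_simplicial:
  assumes "finite U" "chordal U E" "U \<noteq> {}"
  obtains w where "simplicial U E w"
proof (cases "\<forall>x\<in>U. \<forall>y\<in>U. x \<noteq> y \<longrightarrow> E x y")
  case True
  then show ?thesis
    using assms(3) that unfolding simplicial_def clique_def nbhd_def by blast
next
  case False
  then obtain x y where "x \<in> U" "y \<in> U" "x \<noteq> y" "\<not> E x y" by blast
  then show ?thesis using exists_simplicial_nonadjacent[OF assms(1,2)] that by metis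
qed

end

section \<open>Well-covered chordal graphs\<close>

context simple_adj
begin

lemma nonsimplicial_neighbour_outside_clique:
  assumes "x \<in> U" "\<not> simplicial U E x" "clique E K"
  obtains y where "y \<in> U" "E x y" "y \<notin> K"
proof -
  have "\<not> nbhd U E x \<subseteq> K"
    using assms clique_def simplicial_def by (metis subsetD)
  then show ?thesis using that unfolding nbhd_def by blast
qed

lemma chordal_clique_neighbour_transfer:
  assumes "chordal U E" "clique E C" "C \<subseteq> U" "c \<in> C" "c' \<in> C" "y \<in> U - C" "t \<in> U - C"
    and "E c y" "E y t" "E c' t" "\<not> E c t"
  shows "E c' y"
proof (rule ccontr)
  assume "\<not> E c' y"
  have "c \<noteq> c'" using assms(10,11) by blast
  moreover have "y \<noteq> t" using assms(9) adj_irrefl by blast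
  ultimately have "distinct [c, y, t, c']" using assms(4-7) by auto
  moreover have "E t c'" "E c' c" "\<not> E y c'"
    using assms(2,4,5,10) \<open>c \<noteq> c'\<close> \<open>\<not> E c' y\<close> adj_sym unfolding clique_def by blast+
  moreover have "{c, y, t, c'} \<subseteq> U" using assms(3-7) by blast
  ultimately show False using chordal_no_C4[OF assms(1) _ _ assms(8,9)] assms(11) by blast
qed

lemma dominating_exchange:
  assumes "chordal U E" "clique E C" "C \<subseteq> U" "T \<subseteq> U - C" "independent U E T"
    and "c \<in> C" "\<forall>t\<in>T. \<not> E c t" "y \<in> U - C" "E c y"
  defines "T' \<equiv> insert y {t\<in>T. \<not> E y t}"
  shows "T' \<subseteq> U - C" "independent U E T'"
    and "{c\<in>C. \<exists>t\<in>T. E c t} \<subset> {c\<in>C. \<exists>t\<in>T'. E c t}"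
proof -
  show "T' \<subseteq> U - C" using assms(4,8) unfolding T'_def by blast
  have "independent U E {t\<in>T. \<not> E y t}" using assms(5) unfolding independent_def by blast
  then show "independent U E T'"
    using assms(8) independent_insert[of U "{t\<in>T. \<not> E y t}" y] unfolding T'_def by blast
  have "c' \<in> C \<Longrightarrow> t \<in> T \<Longrightarrow> E c' t \<Longrightarrow> \<exists>t'\<in>T'. E c' t'" for c' t
    using chordal_clique_neighbour_transfer[OF assms(1-3,6) _ assms(8), of _ t] assms(4,7,9)
    unfolding T'_def by blast
  moreover have "\<exists>t'\<in>T'. E c t'" using assms(9) unfolding T'_def by blast
  ultimately show "{c\<in>C. \<exists>t\<in>T. E c t} \<subset> {c\<in>C. \<exists>t\<in>T'. E c t}" using assms(6,7) by blast
qed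

lemma exists_independent_dominating_clique:
  assumes "finite U" "chordal U E" "C \<subseteq> U" "clique E C"
    and escape: "\<forall>c\<in>C. \<exists>y\<in>U - C. E c y"
  obtains T where "T \<subseteq> U - C" "independent U E T" "\<forall>c\<in>C. \<exists>t\<in>T. E c t"
proof -
  let ?P = "\<lambda>T. T \<subseteq> U - C \<and> independent U E T"
  let ?dom = "\<lambda>T. {c\<in>C. \<exists>t\<in>T. E c t}"
  have finC: "finite C" using assms(1,3) finite_subset by blast
  have "card (?dom T) < card C + 1" for T
    using card_mono[OF finC, of "?dom T"] by auto
  then obtain T where T: "?P T" and best: "\<And>T'. ?P T' \<Longrightarrow> card (?dom T') \<le> card (?dom T)"
    using ex_has_greatest_nat[of ?P "{}" "\<lambda>T. card (?dom T)" "card C + 1"]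
    by (auto simp: independent_def)
  have "\<forall>c\<in>C. \<exists>t\<in>T. E c t"
  proof (rule ccontr)
    assume "\<not> ?thesis"
    then obtain c where c: "c \<in> C" "\<forall>t\<in>T. \<not> E c t" by blast
    obtain y where y: "y \<in> U - C" "E c y" using escape c by blast
    let ?T' = "insert y {t\<in>T. \<not> E y t}"
    note exchange = dominating_exchange[OF assms(2,4,3) T[THEN conjunct1] T[THEN conjunct2] c y]
    have "card (?dom T) < card (?dom ?T')" using finC exchange(3) by (intro psubset_card_mono) auto
    moreover have "card (?dom ?T') \<le> card (?dom T)" using best exchange(1,2) by blast
    ultimately show False by linarith
  qed
  then show ?thesis using T that by blast
qed

lemma clique_common_neighbour:
  assumes "finite Q" "chordal U E" "Q \<subseteq> U" "W \<subseteq> U" "clique E Q" "clique E W"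
    and "Q \<inter> W = {}" "W \<noteq> {}" and adj: "\<forall>w\<in>W. \<exists>q\<in>Q. E w q"
  shows "\<exists>q\<in>Q. \<forall>w\<in>W. E w q"
proof -
  let ?N = "\<lambda>w. {q\<in>Q. E w q}"
  obtain w1 where "w1 \<in> W" using assms(8) by blast
  then obtain w0 where w0: "w0 \<in> W" and fewest: "\<And>w. w \<in> W \<Longrightarrow> card (?N w0) \<le> card (?N w)"
    using ex_has_least_nat[of "\<lambda>w. w \<in> W" w1 "\<lambda>w. card (?N w)"] by blast
  obtain q where q: "q \<in> Q" "E w0 q" using adj w0 by blast
  have "E w q" if w: "w \<in> W" for w
  proof (rule ccontr)
    assume "\<not> E w q"
    have "\<not> ?N w \<subseteq> ?N w0"
    proof
      assume "?N w \<subseteq> ?N w0"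
      then have "?N w \<subset> ?N w0" using q \<open>\<not> E w q\<close> by blast
      then have "card (?N w) < card (?N w0)" using assms(1) by (intro psubset_card_mono) auto
      then show False using fewest[OF w] by linarith
    qed
    then obtain q' where q': "q' \<in> Q" "E w q'" "\<not> E w0 q'" by blast
    have "w \<noteq> w0" "q \<noteq> q'" using q q' \<open>\<not> E w q\<close> by blast+
    then have "distinct [w0, q, q', w]" using assms(7) q q' w w0 by auto
    moreover have "E q q'" "E w w0" using assms(5,6) q q' w w0 \<open>w \<noteq> w0\<close> \<open>q \<noteq> q'\<close>
      unfolding clique_def by blast+
    moreover have "E q' w" "\<not> E q w" using q'(2) \<open>\<not> E w q\<close> adj_sym by blast+
    moreover have "{w0, q, q', w} \<subseteq> U" using assms(3,4) q q' w w0 by blast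
    ultimately show False using chordal_no_C4[OF assms(2)] q(2) q'(3) by blast
  qed
  then show ?thesis using q by blast
qed

lemma simplicial_swap_independent:
  assumes "simplicial U E s1" "simplicial U E s2" "\<not> E s1 s2"
    and S: "independent U E S" "v \<in> S" and "E s1 v" "E s2 v"
  shows "independent U E (insert s1 (insert s2 (S - {v})))"
proof -
  have away: "\<forall>w\<in>S - {v}. \<not> E s w" if "simplicial U E s" "E s v" for s
    using that S unfolding simplicial_def clique_def nbhd_def independent_def by blast
  have "independent U E (S - {v})" using S(1) unfolding independent_def by blast
  then have "independent U E (insert s2 (S - {v}))"
    using independent_insert away[OF assms(2,7)] assms(2) unfolding simplicial_def by blast
  then show ?thesis
    using independent_insert away[OF assms(1,6)] assms(1,3) unfolding simplicial_def by blast
qed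

lemma well_covered_simplices_disjoint:
  assumes "finite U" "well_covered U E" "simplicial U E s1" "simplicial U E s2"
    and "v \<in> insert s1 (nbhd U E s1)" "v \<in> insert s2 (nbhd U E s2)"
  shows "insert s1 (nbhd U E s1) = insert s2 (nbhd U E s2)"
proof (cases "s1 \<in> insert s2 (nbhd U E s2)")
  case True
  then show ?thesis using simplicial_closed_nbhd_eq[OF assms(4,3)] by simp
next
  case False
  then have ne: "s1 \<noteq> s2" "\<not> E s1 s2"
    using assms(3) adj_sym unfolding nbhd_def simplicial_def by blast+
  then have "v \<noteq> s1" "v \<noteq> s2" using False assms(5,6) unfolding nbhd_def by auto
  then have v: "v \<in> U" "E s1 v" "E s2 v" using assms(5,6) unfolding nbhd_def by auto
  moreover have "independent U E {v}" using v(1) adj_irrefl unfolding independent_def by blast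
  ultimately obtain S where S: "max_independent U E S" "v \<in> S"
    using assms(2) unfolding well_covered_def by blast
  then have S': "independent U E S" "finite S"
    using independent_finite[OF assms(1)] unfolding max_independent_def by blast+
  then have "s1 \<notin> S" "s2 \<notin> S" using S(2) v(2,3) unfolding independent_def by blast+
  have "independent U E (insert s1 (insert s2 (S - {v})))"
    using simplicial_swap_independent[OF assms(3,4) ne(2) S'(1) S(2) v(2,3)] .
  then have "card (insert s1 (insert s2 (S - {v}))) \<le> card S"
    using S(1) unfolding max_independent_def by blast
  then show ?thesis using S(2) S'(2) \<open>s1 \<notin> S\<close> \<open>s2 \<notin> S\<close> ne(1)
    by (simp add: card_Diff_singleton)
qed

lemma independent_insert_simplicial:
  assumes "simplicial U E s" "independent (U - insert s (nbhd U E s)) E T"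
  shows "independent U E (insert s T)" "s \<notin> T"
proof -
  have "independent U E T" "\<forall>t\<in>T. \<not> E s t" "s \<notin> T"
    using assms(2) unfolding independent_def nbhd_def by auto
  then show "independent U E (insert s T)" "s \<notin> T"
    using independent_insert assms(1) unfolding simplicial_def by blast+
qed

lemma max_independent_remove_simplex:
  assumes "finite U" "simplicial U E s" "max_independent U E S" "q \<in> S \<inter> insert s (nbhd U E s)"
  shows "max_independent (U - insert s (nbhd U E s)) E (S - {q})"
proof -
  let ?Q = "insert s (nbhd U E s)"
  have S: "independent U E S" using assms(3) unfolding max_independent_def by blast
  have "finite S" using independent_finite[OF assms(1) S] .
  have "S \<inter> ?Q = {q}"
    using independent_clique_unique[OF S clique_closed_nbhd[OF assms(2)]] assms(4) by blast
  then have "independent (U - ?Q) E (S - {q})" using S unfolding independent_def by blast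
  moreover have "card T \<le> card (S - {q})" if T: "independent (U - ?Q) E T" for T
  proof -
    have "card (insert s T) \<le> card S"
      using independent_insert_simplicial[OF assms(2) T] assms(3) unfolding max_independent_def
      by blast
    moreover have "finite T" using T assms(1) independent_finite by blast
    ultimately show ?thesis
      using independent_insert_simplicial[OF assms(2) T] assms(4) \<open>finite S\<close> by simp
  qed
  ultimately show ?thesis unfolding max_independent_def by blast
qed

lemma well_covered_remove_simplex:
  assumes "finite U" "well_covered U E" "simplicial U E s"
  shows "well_covered (U - insert s (nbhd U E s)) E"
  unfolding well_covered_def
proof (intro allI impI)
  fix A assume A: "independent (U - insert s (nbhd U E s)) E A"
  obtain S where "max_independent U E S" "insert s A \<subseteq> S"
    using assms(2) independent_insert_simplicial[OF assms(3) A] unfolding well_covered_def by blast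
  then show "\<exists>S. max_independent (U - insert s (nbhd U E s)) E S \<and> A \<subseteq> S"
    using max_independent_remove_simplex[OF assms(1,3), of S s]
      independent_insert_simplicial[OF assms(3) A] by blast
qed

lemma maximal_independent_insert_clique:
  assumes "clique E Q" "q \<in> Q" "Q \<subseteq> U" and M: "maximal_independent {x\<in>U - Q. \<not> E x q} E M"
  shows "maximal_independent U E (insert q M)"
proof -
  have "independent U E M" "\<forall>m\<in>M. \<not> E q m"
    using M adj_sym unfolding maximal_independent_def independent_def by blast+
  then have "independent U E (insert q M)" using independent_insert assms(2,3) by blast
  moreover have "\<exists>y\<in>insert q M. E x y" if "x \<in> U - insert q M" for x
    using that assms(1,2) M unfolding maximal_independent_def clique_def by blast
  ultimately show ?thesis unfolding maximal_independent_def by blast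
qed

lemma nonsimplicial_outside_neighbour_avoiding:
  assumes "chordal U E" "U' \<subseteq> U" "simplicial U' E u" "r \<in> nbhd U' E u" "\<not> simplicial U' E r"
    and "q \<in> U - U'" "E u q" "\<not> E r q"
  obtains z where "z \<in> U'" "z \<notin> insert u (nbhd U' E u)" "E r z" "\<not> E z q"
proof -
  let ?R = "insert u (nbhd U' E u)"
  have r: "r \<in> U'" "E u r" using assms(4) unfolding nbhd_def by auto
  obtain z where z: "z \<in> U'" "E r z" "z \<notin> ?R"
    using nonsimplicial_neighbour_outside_clique[OF r(1) assms(5) clique_closed_nbhd[OF assms(3)]]
    by blast
  have "\<not> E z q"
  proof
    assume "E z q"
    have "u \<noteq> r" "r \<noteq> z" "u \<in> U'" using assms(3,7,8) z(2) adj_irrefl unfolding simplicial_def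
      by blast+
    then have "distinct [q, u, r, z]" using assms(6) z r by auto
    moreover have "{q, u, r, z} \<subseteq> U" using assms(2,3,6) z r unfolding simplicial_def by blast
    moreover have "E q u" "\<not> E q r" "\<not> E u z" "E z q"
      using assms(7,8) adj_sym z r \<open>E z q\<close> unfolding nbhd_def by blast+
    ultimately show False using chordal_no_C4[OF assms(1)] r(2) z(2) by blast
  qed
  then show ?thesis using that z by blast
qed

lemma well_covered_extend_avoiding_neighbour:
  assumes "finite U" "well_covered U E" "simplicial U E s"
  defines "Q \<equiv> insert s (nbhd U E s)"
  assumes "q \<in> Q" "independent {x\<in>U - Q. \<not> E x q} E T"
  obtains M where "max_independent (U - Q) E M" "T \<subseteq> M" "\<forall>m\<in>M. \<not> E m q"
proof -
  have "finite {x\<in>U - Q. \<not> E x q}" using assms(1) by simp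
  then obtain M where M: "T \<subseteq> M" "maximal_independent {x\<in>U - Q. \<not> E x q} E M"
    using independent_extends_maximal assms(6) by blast
  then have avoid: "\<forall>m\<in>M. \<not> E m q" "q \<notin> M"
    using assms(5) unfolding maximal_independent_def independent_def by auto
  have "Q \<subseteq> U" using assms(3) unfolding Q_def simplicial_def nbhd_def by auto
  then have "maximal_independent U E (insert q M)"
    using maximal_independent_insert_clique[OF clique_closed_nbhd[OF assms(3)]] assms(5) M(2)
    unfolding Q_def by blast
  then have "max_independent U E (insert q M)" by (rule maximal_independent_max[OF assms(2)])
  then have "max_independent (U - Q) E (insert q M - {q})"
    using max_independent_remove_simplex[OF assms(1,3)] assms(5) unfolding Q_def by blast
  moreover have "insert q M - {q} = M" using avoid(2) by simp
  ultimately show ?thesis using that M(1) avoid(1) by simp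
qed

lemma simplex_common_neighbour:
  assumes "finite U" "chordal U E" "clique E Q" "Q \<subseteq> U" "U' \<subseteq> U - Q" "simplicial U' E u"
    and "\<forall>w\<in>insert u (nbhd U' E u). simplicial U' E w \<longrightarrow> (\<exists>q\<in>Q. E w q)"
  obtains q where "q \<in> Q" "\<forall>w\<in>insert u (nbhd U' E u). simplicial U' E w \<longrightarrow> E w q"
proof -
  let ?W = "{w\<in>insert u (nbhd U' E u). simplicial U' E w}"
  have "finite Q" using finite_subset[OF assms(4,1)] .
  moreover have "?W \<subseteq> U" "Q \<inter> ?W = {}" "?W \<noteq> {}"
    using assms(5,6) unfolding nbhd_def simplicial_def by auto
  moreover have "clique E ?W" using clique_closed_nbhd[OF assms(6)] unfolding clique_def by blast
  ultimately have "\<exists>q\<in>Q. \<forall>w\<in>?W. E w q"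
    using clique_common_neighbour[OF _ assms(2,4) _ assms(3)] assms(7) by blast
  then show ?thesis using that by blast
qed

text \<open>The key step of the induction: a simplex of \<open>U - Q\<close> still contains a vertex that is
  simplicial in \<open>U\<close>. Otherwise some \<open>q \<in> Q\<close> sees all its simplicial vertices, and a maximum
  independent set of \<open>U - Q\<close> that avoids the neighbours of \<open>q\<close> and dominates the rest of the
  simplex leaves room for \<open>u\<close>.\<close>
lemma simplicial_avoiding_simplex:
  assumes "finite U" "chordal U E" "well_covered U E" "simplicial U E s"
  defines "Q \<equiv> insert s (nbhd U E s)"
  defines "U' \<equiv> U - Q"
  assumes u: "simplicial U' E u"
  shows "\<exists>w\<in>insert u (nbhd U' E u). simplicial U' E w \<and> (\<forall>q\<in>Q. \<not> E w q)"
proof (rule ccontr)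
  assume none: "\<not> ?thesis"
  define R where "R = insert u (nbhd U' E u)"
  have QU: "Q \<subseteq> U" and RU': "R \<subseteq> U'" and "U' \<subseteq> U" "U' \<subseteq> U - Q"
    using assms(4) u unfolding Q_def U'_def R_def nbhd_def simplicial_def by auto
  have cliques: "clique E Q" "clique E R"
    using clique_closed_nbhd[OF assms(4)] clique_closed_nbhd[OF u] unfolding Q_def R_def by blast+
  have "\<forall>w\<in>R. simplicial U' E w \<longrightarrow> (\<exists>q\<in>Q. E w q)" using none unfolding R_def by blast
  then obtain q where q: "q \<in> Q" "\<forall>w\<in>R. simplicial U' E w \<longrightarrow> E w q"
    using simplex_common_neighbour[OF assms(1,2) cliques(1) QU \<open>U' \<subseteq> U - Q\<close> u]
    unfolding R_def by blast
  have "q \<in> U - U'" "E u q" using q QU u unfolding U'_def R_def by auto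
  define U'' where "U'' = {x\<in>U'. \<not> E x q}"
  have escape: "\<forall>r\<in>R \<inter> U''. \<exists>z\<in>U'' - R \<inter> U''. E r z"
  proof
    fix r assume r: "r \<in> R \<inter> U''"
    then have "r \<in> nbhd U' E u" "\<not> simplicial U' E r"
      using q(2) \<open>E u q\<close> unfolding U''_def R_def by auto
    then obtain z where "z \<in> U'" "z \<notin> R" "E r z" "\<not> E z q"
      using nonsimplicial_outside_neighbour_avoiding[OF assms(2) \<open>U' \<subseteq> U\<close> u _ _ \<open>q \<in> U - U'\<close> \<open>E u q\<close>] r
      unfolding R_def U''_def by blast
    then show "\<exists>z\<in>U'' - R \<inter> U''. E r z" unfolding U''_def by blast
  qed
  have "finite U''" using assms(1) unfolding U''_def U'_def by simp
  have "chordal U'' E" by (rule chordal_subset[OF assms(2)]) (auto simp: U''_def U'_def)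
  have "clique E (R \<inter> U'')" using cliques(2) unfolding clique_def by blast
  obtain T where T: "independent U'' E T" "\<forall>r\<in>R \<inter> U''. \<exists>t\<in>T. E r t"
    using exists_independent_dominating_clique[OF \<open>finite U''\<close> \<open>chordal U'' E\<close> _
        \<open>clique E (R \<inter> U'')\<close> escape] by blast
  obtain M where M: "max_independent U' E M" "T \<subseteq> M" "\<forall>m\<in>M. \<not> E m q"
    using well_covered_extend_avoiding_neighbour[OF assms(1,3,4) q(1)[unfolded Q_def]] T(1)
    unfolding U''_def U'_def Q_def by blast
  have indep: "independent U' E M" using M(1) unfolding max_independent_def by blast
  have "finite M" using independent_finite[OF _ indep] assms(1) unfolding U'_def by simp
  have "M \<inter> R = {}"
  proof (intro equals0I)
    fix m assume m: "m \<in> M \<inter> R"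
    then have "m \<in> R \<inter> U''" using M(3) indep unfolding independent_def U''_def by blast
    then obtain t where "t \<in> T" "E m t" using T(2) by blast
    then show False using m M(2) indep unfolding independent_def by blast
  qed
  then have "\<forall>m\<in>M. \<not> E u m" using indep unfolding R_def nbhd_def independent_def by blast
  then have "independent U' E (insert u M)" using independent_insert[OF indep] RU' unfolding R_def
    by blast
  then have "card (insert u M) \<le> card M" using M(1) unfolding max_independent_def by blast
  then show False using \<open>finite M\<close> \<open>M \<inter> R = {}\<close> unfolding R_def by simp
qed

lemma well_covered_chordal_in_simplex:
  assumes "finite U" "well_covered U E" "chordal U E" "v \<in> U"
  shows "\<exists>w. simplicial U E w \<and> v \<in> insert w (nbhd U E w)"
  using assms
proof (induction "card U" arbitrary: U rule: less_induct)
  case less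
  obtain s where s: "simplicial U E s" using exists_simplicial[OF less.prems(1,3)] less.prems(4) by blast
  define Q where "Q = insert s (nbhd U E s)"
  show ?case
  proof (cases "v \<in> Q")
    case True
    then show ?thesis using s unfolding Q_def by blast
  next
    case False
    define U' where "U' = U - Q"
    have "s \<in> Q" "Q \<subseteq> U" using s unfolding Q_def simplicial_def nbhd_def by auto
    then have "U' \<subset> U" unfolding U'_def by blast
    then have "card U' < card U" by (rule psubset_card_mono[OF less.prems(1)])
    moreover have "finite U'" "well_covered U' E" "chordal U' E" "v \<in> U'"
      using less.prems well_covered_remove_simplex[OF less.prems(1,2) s]
        chordal_subset[OF less.prems(3), of U'] False
      unfolding U'_def Q_def by auto
    ultimately obtain u where u: "simplicial U' E u" "v \<in> insert u (nbhd U' E u)"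
      using less.hyps by blast
    obtain w where w: "w \<in> insert u (nbhd U' E u)" "simplicial U' E w" "\<forall>q\<in>Q. \<not> E w q"
      using simplicial_avoiding_simplex[OF less.prems(1,3,2) s u(1)[unfolded U'_def Q_def]]
      unfolding U'_def Q_def by blast
    have "nbhd U E w \<subseteq> U'"
      using w(3) unfolding nbhd_def U'_def by blast
    then have "simplicial U E w" "nbhd U E w = nbhd U' E w"
      using simplicial_subset[OF w(2)] unfolding U'_def nbhd_def by auto
    moreover have "insert w (nbhd U' E w) = insert u (nbhd U' E u)"
      using simplicial_closed_nbhd_eq[OF u(1) w(2,1)] .
    ultimately show ?thesis using u(2) by auto
  qed
qed

lemma well_covered_chordal_simplex_partition:
  assumes "finite V" "well_covered V E" "chordal V E"
  shows "is_partition V {S. simplex V E S}"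
  unfolding is_partition_def
proof (intro conjI ballI impI)
  show "\<Union> {S. simplex V E S} = V"
    using well_covered_chordal_in_simplex[OF assms]
    unfolding simplex_def simplicial_def nbhd_def by blast
  show "{} \<notin> {S. simplex V E S}" unfolding simplex_def by blast
  fix X Y assume "X \<in> {S. simplex V E S}" "Y \<in> {S. simplex V E S}" "X \<noteq> Y"
  then show "X \<inter> Y = {}"
    using well_covered_simplices_disjoint[OF assms(1,2)] unfolding simplex_def by blast
qed

end

section \<open>The property \<open>W\<^sub>k\<close>\<close>

context simple_adj
begin

text \<open>The sets \<open>A\<^sub>i\<close> are the singletons of \<open>X\<close> together with \<open>T\<close>; the maximum independent set
  through \<open>T\<close> is then disjoint from those through the points of \<open>X\<close>.\<close>
lemma W_k_extend_avoiding:
  assumes "W_k k V E" "independent V E T" "finite X" "X \<subseteq> V" "card X < k" "X \<inter> T = {}"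
  obtains S where "max_independent V E S" "T \<subseteq> S" "S \<inter> X = {}"
proof -
  let ?n = "card X"
  obtain h where h: "bij_betw h {0..<?n} X" using ex_bij_betw_nat_finite[OF assms(3)] by blast
  define A where "A i = (if i < ?n then {h i} else if i = ?n then T else {})" for i
  have hX: "h i \<in> X" if "i < ?n" for i using bij_betwE[OF h] that by simp
  have "independent V E (A i)" for i
    using assms(2,4) hX adj_irrefl unfolding A_def independent_def by auto
  moreover have "A i \<inter> A j = {}" if "i \<noteq> j" for i j
    using that assms(6) hX inj_on_eq_iff[OF bij_betw_imp_inj_on[OF h]] unfolding A_def by auto
  ultimately obtain S where S: "\<forall>i<k. max_independent V E (S i) \<and> A i \<subseteq> S i"
    "\<forall>i<k. \<forall>j<k. i \<noteq> j \<longrightarrow> S i \<inter> S j = {}"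
    using assms(1)[unfolded W_k_def, rule_format, of A] by blast
  have "S ?n \<inter> X = {}"
  proof (intro equals0I)
    fix x assume x: "x \<in> S ?n \<inter> X"
    then have "x \<in> h ` {0..<?n}" using h by (simp add: bij_betw_def)
    then obtain i where "i < ?n" "x = h i" by auto
    moreover have "i < k" using \<open>i < ?n\<close> assms(5) by simp
    then have "A i \<subseteq> S i" using S(1) by blast
    ultimately have "x \<in> S i" unfolding A_def by simp
    moreover have "S i \<inter> S ?n = {}" using S(2) \<open>i < k\<close> \<open>i < ?n\<close> assms(5) by simp
    ultimately show False using x by blast
  qed
  moreover have "max_independent V E (S ?n)" "A ?n \<subseteq> S ?n" using S(1) assms(5) by blast+
  ultimately show ?thesis using that unfolding A_def by simp
qed

lemma W_k_well_covered:
  assumes "W_k k V E" "1 \<le> k"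
  shows "well_covered V E"
  unfolding well_covered_def
proof (intro allI impI)
  fix A assume "independent V E A"
  then obtain S where "max_independent V E S" "A \<subseteq> S"
    using W_k_extend_avoiding[OF assms(1), of A "{}"] assms(2) by auto
  then show "\<exists>S. max_independent V E S \<and> A \<subseteq> S" by blast
qed

lemma W_k_simplex_card:
  assumes "finite V" "chordal V E" "W_k k V E" "simplex V E Q"
  shows "k \<le> card {v\<in>Q. simplicial V E v}"
proof (rule ccontr)
  define Sim where "Sim = {v\<in>Q. simplicial V E v}"
  assume "\<not> k \<le> card {v\<in>Q. simplicial V E v}"
  then have few: "card Sim < k" unfolding Sim_def by simp
  obtain u where u: "simplicial V E u" "Q = insert u (nbhd V E u)"
    using assms(4) unfolding simplex_def by blast
  have "Q \<subseteq> V" "clique E Q" using u clique_closed_nbhd unfolding simplicial_def nbhd_def by auto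
  have escape: "\<forall>x\<in>Q - Sim. \<exists>y\<in>(V - Sim) - (Q - Sim). E x y"
  proof
    fix x assume "x \<in> Q - Sim"
    then have "x \<in> V" "\<not> simplicial V E x" using \<open>Q \<subseteq> V\<close> unfolding Sim_def by auto
    then obtain y where "y \<in> V" "E x y" "y \<notin> Q"
      using nonsimplicial_neighbour_outside_clique \<open>clique E Q\<close> by blast
    then show "\<exists>y\<in>(V - Sim) - (Q - Sim). E x y" unfolding Sim_def by blast
  qed
  have sub: "finite (V - Sim)" "Q - Sim \<subseteq> V - Sim" "clique E (Q - Sim)"
    using assms(1) \<open>Q \<subseteq> V\<close> \<open>clique E Q\<close> unfolding clique_def by auto
  have "chordal (V - Sim) E" by (rule chordal_subset[OF assms(2)]) blast
  then obtain T where "T \<subseteq> (V - Sim) - (Q - Sim)" "independent (V - Sim) E T"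
    and dom: "\<forall>x\<in>Q - Sim. \<exists>t\<in>T. E x t"
    by (rule exists_independent_dominating_clique[OF sub(1) _ sub(2,3) escape])
  then have T: "T \<subseteq> V - Q" "independent V E T"
    unfolding independent_def Sim_def by auto
  have "Sim \<subseteq> V" "Sim \<inter> T = {}" using \<open>Q \<subseteq> V\<close> T(1) unfolding Sim_def by auto
  moreover have "finite Sim" using finite_subset[OF \<open>Sim \<subseteq> V\<close> assms(1)] .
  ultimately obtain S where S: "max_independent V E S" "T \<subseteq> S" "S \<inter> Sim = {}"
    using W_k_extend_avoiding[OF assms(3) T(2) _ _ few] by blast
  then obtain q where "q \<in> S" "q \<in> Q - Sim"
    using max_independent_meets_simplex[OF assms(1) S(1) u(1)] u(2) by blast
  then obtain t where "t \<in> S" "E q t" using dom S(2) by blast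
  then show False using \<open>q \<in> S\<close> S(1) unfolding max_independent_def independent_def by blast
qed

end

lemma card_missing_le_card_unused:
  assumes "finite Q" "Z \<subseteq> Q" "k \<le> card Z"
    and single: "\<And>i a b. i < k \<Longrightarrow> a \<in> A i \<inter> Q \<Longrightarrow> b \<in> A i \<inter> Q \<Longrightarrow> a = b"
  shows "card {i\<in>{..<k}. A i \<inter> Q = {}} \<le> card (Z - (\<Union>i<k. A i))"
proof -
  let ?J = "{i\<in>{..<k}. A i \<inter> Q = {}}" and ?M = "{i\<in>{..<k}. A i \<inter> Q \<noteq> {}}"
  have "finite ?J" "finite ?M" by simp_all
  moreover have "?J \<union> ?M = {..<k}" "?J \<inter> ?M = {}" by auto
  ultimately have "card ?J + card ?M = k" using card_Un_disjoint[of ?J ?M] by simp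
  have "card (Z \<inter> (\<Union>i<k. A i)) \<le> card (\<Union>i\<in>?M. A i \<inter> Q)"
    using assms(1,2) by (intro card_mono) auto
  also have "\<dots> \<le> (\<Sum>i\<in>?M. card (A i \<inter> Q))" by (rule card_UN_le) simp
  also have "\<dots> \<le> (\<Sum>i\<in>?M. 1)"
    using single card_le_Suc0_iff_eq[of "A _ \<inter> Q"] assms(1) by (intro sum_mono) auto
  finally have "card (Z \<inter> (\<Union>i<k. A i)) \<le> card ?M" by simp
  moreover have "card (Z - (\<Union>i<k. A i)) = card Z - card (Z \<inter> (\<Union>i<k. A i))"
    using finite_subset[OF assms(2,1)] by (intro card_Diff_subset_Int) simp
  ultimately show ?thesis using \<open>card ?J + card ?M = k\<close> assms(3) by linarith
qed

lemma exists_injective_choice: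
  assumes "finite Q" "Z \<subseteq> Q" "k \<le> card Z"
    and single: "\<And>i a b. i < k \<Longrightarrow> a \<in> A i \<inter> Q \<Longrightarrow> b \<in> A i \<inter> Q \<Longrightarrow> a = b"
    and disj: "\<And>i j. i < k \<Longrightarrow> j < k \<Longrightarrow> i \<noteq> j \<Longrightarrow> A i \<inter> A j = {}"
  shows "\<exists>f. inj_on f {..<k} \<and> (\<forall>i<k. f i \<in> Q \<and> (A i \<inter> Q \<noteq> {} \<longrightarrow> f i \<in> A i) \<and>
    (A i \<inter> Q = {} \<longrightarrow> f i \<in> Z - (\<Union>j<k. A j)))"
proof -
  let ?J = "{i\<in>{..<k}. A i \<inter> Q = {}}" and ?F = "Z - (\<Union>j<k. A j)"
  have "finite ?F" using finite_subset[OF assms(2,1)] by simp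
  then obtain g where g: "inj_on g ?J" "g ` ?J \<subseteq> ?F"
    using card_le_inj[of ?J ?F] card_missing_le_card_unused[OF assms(1-3) single] by auto
  define f where "f i = (if A i \<inter> Q = {} then g i else (THE a. a \<in> A i \<inter> Q))" for i
  have met: "f i \<in> A i \<inter> Q" if i: "i < k" "A i \<inter> Q \<noteq> {}" for i
  proof -
    obtain a where a: "a \<in> A i \<inter> Q" using i(2) by blast
    have "(THE a. a \<in> A i \<inter> Q) \<in> A i \<inter> Q"
      by (rule theI[of _ a]) (use a single[OF i(1)] in blast)+
    then show ?thesis using i(2) unfolding f_def by simp
  qed
  have unmet: "f i \<in> ?F" if "i < k" "A i \<inter> Q = {}" for i
    using g(2) that unfolding f_def by auto
  have "inj_on f {..<k}"
  proof (rule inj_onI)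
    fix i j assume ij: "i \<in> {..<k}" "j \<in> {..<k}" "f i = f j"
    show "i = j"
    proof (cases "A i \<inter> Q = {}"; cases "A j \<inter> Q = {}")
      assume "A i \<inter> Q = {}" "A j \<inter> Q = {}"
      then show ?thesis using ij g(1) unfolding f_def inj_on_def by auto
    next
      assume "A i \<inter> Q \<noteq> {}" "A j \<inter> Q \<noteq> {}"
      then have "f i \<in> A i \<inter> A j" using ij met[of i] met[of j] by auto
      then show ?thesis using ij disj by auto
    next
      assume "A i \<inter> Q = {}" "A j \<inter> Q \<noteq> {}"
      then have "f i \<in> ?F" "f i \<in> A j" using ij met[of j] unmet[of i] by auto
      then show ?thesis using ij(2) by auto
    next
      assume "A i \<inter> Q \<noteq> {}" "A j \<inter> Q = {}"
      then have "f j \<in> ?F" "f j \<in> A i" using ij met[of i] unmet[of j] by auto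
      then show ?thesis using ij(1) by auto
    qed
  qed
  moreover have "f i \<in> Q" if "i < k" for i
    using met[OF that] unmet[OF that] assms(2) by blast
  ultimately show ?thesis using met unmet by blast
qed

lemma independent_card_le_clique_partition:
  assumes "finite V" "is_partition V P" "\<forall>Q\<in>P. clique E Q" "independent V E T"
  shows "card T \<le> card P"
proof -
  have P: "\<Union>P = V" "\<forall>X\<in>P. \<forall>Y\<in>P. X \<noteq> Y \<longrightarrow> X \<inter> Y = {}"
    using assms(2) unfolding is_partition_def by auto
  define block where "block v = (SOME Q. Q \<in> P \<and> v \<in> Q)" for v
  have block: "block v \<in> P" "v \<in> block v" if "v \<in> V" for v
    using someI_ex[of "\<lambda>Q. Q \<in> P \<and> v \<in> Q"] that P(1) unfolding block_def by blast+
  have "T \<subseteq> V" using assms(4) unfolding independent_def by blast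
  have "inj_on block T"
  proof (rule inj_onI)
    fix x y assume "x \<in> T" "y \<in> T" "block x = block y"
    then have "x \<in> T \<inter> block x" "y \<in> T \<inter> block x" using block \<open>T \<subseteq> V\<close> by (metis IntI subsetD)+
    then show "x = y"
      using independent_clique_unique[OF assms(4)] assms(3) block \<open>T \<subseteq> V\<close> \<open>x \<in> T\<close> by blast
  qed
  moreover have "block ` T \<subseteq> P" using block \<open>T \<subseteq> V\<close> by blast
  moreover have "finite P" using assms(1) P(1) by (metis finite_UnionD)
  ultimately show ?thesis by (rule card_inj_on_le)
qed

context simple_adj
begin

lemma simplicial_nbhd_subset_simplex:
  assumes "simplex V E Q" "w \<in> Q" "simplicial V E w"
  shows "nbhd V E w \<subseteq> Q"
  using assms simplicial_closed_nbhd_eq unfolding simplex_def by blast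

text \<open>Two chosen vertices are never adjacent, since the neighbourhood of a simplicial choice stays
  inside its own simplex.\<close>
lemma simplex_partition_section_max_independent:
  assumes "finite V" "is_partition V P" "\<forall>Q\<in>P. simplex V E Q" "independent V E A"
    and s: "\<forall>Q\<in>P. s Q \<in> Q \<and> (simplicial V E (s Q) \<or> s Q \<in> A)"
  shows "max_independent V E (s ` P)"
proof -
  have P: "\<Union>P = V" "\<forall>X\<in>P. \<forall>Y\<in>P. X \<noteq> Y \<longrightarrow> X \<inter> Y = {}"
    using assms(2) unfolding is_partition_def by auto
  have sV: "s Q \<in> V" if "Q \<in> P" for Q using P(1) s that by blast
  have stay: "s Y \<in> X" if "X \<in> P" "Y \<in> P" "simplicial V E (s X)" "E (s X) (s Y)" for X Y
  proof -
    have "nbhd V E (s X) \<subseteq> X" using simplicial_nbhd_subset_simplex assms(3) s that(1,3) by blast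
    moreover have "s Y \<in> nbhd V E (s X)" using sV[OF that(2)] that(4) unfolding nbhd_def by blast
    ultimately show ?thesis by blast
  qed
  have no_edge: "\<not> E (s X) (s Y)" if XY: "X \<in> P" "Y \<in> P" for X Y
  proof
    assume e: "E (s X) (s Y)"
    then have "X \<noteq> Y" using adj_irrefl by blast
    then have "s Y \<notin> X" "s X \<notin> Y" using P(2) s XY by blast+
    then have "\<not> simplicial V E (s X)" "\<not> simplicial V E (s Y)"
      using stay[OF XY] stay[OF XY(2,1)] e adj_sym by blast+
    then have "s X \<in> A" "s Y \<in> A" using s XY by blast+
    then show False using e assms(4) unfolding independent_def by blast
  qed
  have "inj_on s P"
  proof (rule inj_onI)
    fix X Y assume XY: "X \<in> P" "Y \<in> P" "s X = s Y"
    then have "s X \<in> X \<inter> Y" using s by auto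
    then show "X = Y" using P(2) XY(1,2) by blast
  qed
  then have "card (s ` P) = card P" by (rule card_image)
  moreover have "independent V E (s ` P)"
    unfolding independent_def using no_edge sV by blast
  moreover have "\<forall>Q\<in>P. clique E Q"
    using assms(3) clique_closed_nbhd unfolding simplex_def by metis
  then have "card T \<le> card P" if "independent V E T" for T
    using independent_card_le_clique_partition[OF assms(1,2)] that by blast
  ultimately show ?thesis unfolding max_independent_def by simp
qed

lemma simplex_partition_choice:
  assumes "finite V" "is_partition V P" "\<forall>Q\<in>P. simplex V E Q"
    and "\<forall>Q\<in>P. k \<le> card {v\<in>Q. simplicial V E v}"
    and A: "\<And>i. i < k \<Longrightarrow> independent V E (A i)"
    and disj: "\<And>i j. i < k \<Longrightarrow> j < k \<Longrightarrow> i \<noteq> j \<Longrightarrow> A i \<inter> A j = {}"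
  obtains F where "\<And>Q i j. Q \<in> P \<Longrightarrow> i < k \<Longrightarrow> j < k \<Longrightarrow> F Q i = F Q j \<Longrightarrow> i = j"
    and "\<And>Q i. Q \<in> P \<Longrightarrow> i < k \<Longrightarrow> F Q i \<in> Q \<and> (simplicial V E (F Q i) \<or> F Q i \<in> A i)"
    and "\<And>Q i a. Q \<in> P \<Longrightarrow> i < k \<Longrightarrow> a \<in> A i \<inter> Q \<Longrightarrow> F Q i = a"
proof -
  have single: "a = b" if "Q \<in> P" "i < k" "a \<in> A i \<inter> Q" "b \<in> A i \<inter> Q" for Q i a b
    using independent_clique_unique[OF A[OF that(2)] _ that(3,4)] assms(3) that(1)
      clique_closed_nbhd unfolding simplex_def by metis
  define choice where "choice Q f \<longleftrightarrow> inj_on f {..<k} \<and> (\<forall>i<k. f i \<in> Q \<and>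
      (A i \<inter> Q \<noteq> {} \<longrightarrow> f i \<in> A i) \<and>
      (A i \<inter> Q = {} \<longrightarrow> f i \<in> {v\<in>Q. simplicial V E v} - (\<Union>j<k. A j)))" for Q f
  have "\<forall>Q\<in>P. \<exists>f. choice Q f"
    unfolding choice_def
  proof (intro ballI exists_injective_choice)
    fix Q assume "Q \<in> P"
    show "finite Q" using finite_subset[of Q V] \<open>Q \<in> P\<close> assms(1,2) unfolding is_partition_def
      by blast
    show "k \<le> card {v\<in>Q. simplicial V E v}" using assms(4) \<open>Q \<in> P\<close> by blast
  qed (use single disj in auto)
  then obtain F where F: "\<forall>Q\<in>P. choice Q (F Q)" by (metis bchoice)
  show ?thesis
  proof (rule that)
    show "i = j" if "Q \<in> P" "i < k" "j < k" "F Q i = F Q j" for Q i j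
      using F that unfolding choice_def inj_on_def by blast
    show "F Q i \<in> Q \<and> (simplicial V E (F Q i) \<or> F Q i \<in> A i)" if "Q \<in> P" "i < k" for Q i
      using F that unfolding choice_def by blast
    show "F Q i = a" if "Q \<in> P" "i < k" "a \<in> A i \<inter> Q" for Q i a
    proof -
      have "F Q i \<in> A i \<inter> Q" using F that unfolding choice_def by blast
      then show ?thesis using single[OF that(1,2) _ that(3)] by blast
    qed
  qed
qed

lemma simplex_partition_W_k:
  assumes "finite V" "is_partition V P" "\<forall>Q\<in>P. simplex V E Q"
    and "\<forall>Q\<in>P. k \<le> card {v\<in>Q. simplicial V E v}"
  shows "W_k k V E"
  unfolding W_k_def
proof (intro allI impI)
  fix A :: "nat \<Rightarrow> 'a set"
  assume "(\<forall>i<k. independent V E (A i)) \<and> (\<forall>i<k. \<forall>j<k. i \<noteq> j \<longrightarrow> A i \<inter> A j = {})"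
  then have A: "\<And>i. i < k \<Longrightarrow> independent V E (A i)"
    and disj: "\<And>i j. i < k \<Longrightarrow> j < k \<Longrightarrow> i \<noteq> j \<Longrightarrow> A i \<inter> A j = {}" by auto
  obtain F where F_inj: "\<And>Q i j. Q \<in> P \<Longrightarrow> i < k \<Longrightarrow> j < k \<Longrightarrow> F Q i = F Q j \<Longrightarrow> i = j"
    and F_in: "\<And>Q i. Q \<in> P \<Longrightarrow> i < k \<Longrightarrow> F Q i \<in> Q \<and> (simplicial V E (F Q i) \<or> F Q i \<in> A i)"
    and F_met: "\<And>Q i a. Q \<in> P \<Longrightarrow> i < k \<Longrightarrow> a \<in> A i \<inter> Q \<Longrightarrow> F Q i = a"
    using simplex_partition_choice[OF assms, of A, OF A disj] by blast
  have P: "\<Union>P = V" "\<forall>X\<in>P. \<forall>Y\<in>P. X \<noteq> Y \<longrightarrow> X \<inter> Y = {}"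
    using assms(2) unfolding is_partition_def by auto
  define S where "S i = (\<lambda>Q. F Q i) ` P" for i
  show "\<exists>S. (\<forall>i<k. max_independent V E (S i) \<and> A i \<subseteq> S i) \<and>
      (\<forall>i<k. \<forall>j<k. i \<noteq> j \<longrightarrow> S i \<inter> S j = {})"
  proof (intro exI[of _ S] conjI allI impI)
    fix i assume i: "i < k"
    show "max_independent V E (S i)"
      unfolding S_def using F_in i
      by (intro simplex_partition_section_max_independent[OF assms(1-3) A[OF i]]) blast
    show "A i \<subseteq> S i"
    proof
      fix a assume "a \<in> A i"
      moreover obtain Q where "Q \<in> P" "a \<in> Q"
        using \<open>a \<in> A i\<close> A[OF i] P(1) unfolding independent_def by blast
      ultimately have "F Q i = a" using F_met i by blast
      then show "a \<in> S i" using \<open>Q \<in> P\<close> unfolding S_def by (metis image_eqI)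
    qed
  next
    fix i j assume ij: "i < k" "j < k" "i \<noteq> j"
    show "S i \<inter> S j = {}"
    proof (rule equals0I)
      fix x assume "x \<in> S i \<inter> S j"
      then obtain Q Q' where Q: "Q \<in> P" "Q' \<in> P" and x: "x = F Q i" "x = F Q' j"
        unfolding S_def by blast
      then have "x \<in> Q" "x \<in> Q'" using F_in[OF Q(1) ij(1)] F_in[OF Q(2) ij(2)] by simp_all
      then have "Q = Q'" using P(2) Q by blast
      then show False using F_inj[OF Q(1) ij(1,2)] x ij(3) by simp
    qed
  qed
qed

end

theorem proposition1:
  fixes V :: "'a set" and E :: "'a \<Rightarrow> 'a \<Rightarrow> bool" and k :: nat
  assumes "k \<ge> 1"
    and "simple_graph V E"
    and "chordal V E"
  shows "W_k k V E \<longleftrightarrow>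
    (\<exists>P. is_partition V P \<and> (\<forall>S\<in>P. simplex V E S) \<and>
         (\<forall>S\<in>P. card {v\<in>S. simplicial V E v} \<ge> k))"
proof -
  interpret simple_adj E using assms(2) by (rule simple_graph_simple_adj)
  have fin: "finite V" using assms(2) unfolding simple_graph_def by blast
  show ?thesis
  proof
    assume Wk: "W_k k V E"
    then have "is_partition V {S. simplex V E S}"
      using well_covered_chordal_simplex_partition[OF fin _ assms(3)] W_k_well_covered assms(1)
      by blast
    then show "\<exists>P. is_partition V P \<and> (\<forall>S\<in>P. simplex V E S) \<and>
        (\<forall>S\<in>P. card {v\<in>S. simplicial V E v} \<ge> k)"
      using W_k_simplex_card[OF fin assms(3) Wk] by blast
  next
    assume "\<exists>P. is_partition V P \<and> (\<forall>S\<in>P. simplex V E S) \<and>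
        (\<forall>S\<in>P. card {v\<in>S. simplicial V E v} \<ge> k)"
    then show "W_k k V E" using simplex_partition_W_k[OF fin] by blast
  qed
qed

end
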